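(* Let $L\geq1$ be an integer, $P\geq 0$, $p_B\in[0,1]$, and let $\alpha\sim\mathrm{Binomial}(L,1-p_B)$. Then $$\sup_{r\in\mathbb{R}} r\cdot\mathbb{P}\big(\log(1+\alpha P)\geq r\big)=\max_{i\in\{1,\ldots,L\}}\mathbb{P}(\alpha\geq i)\log(1+iP).$$
   Context: The left-hand side is the outage capacity of a multi-point intermittent block fading channel with $L$ transmitters, each independently blocked with probability $p_B$, and per-transmitter power $P$; $\alpha$ is the number of non-blocked transmitters. $\log$ is the logarithm in a fixed base. *)

theory Defs
  imports "HOL-Probability.Probability"
begin

end

theory Submission
  imports Defs
begin

text \<open>
  Since \<open>\<alpha> \<mapsto> log (1 + \<alpha> P)\<close> is monotone and vanishes at \<open>0\<close>, every superlevel set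
  \<open>{\<alpha>. r \<le> log (1 + \<alpha> P)}\<close> with \<open>r > 0\<close> is a tail \<open>{i..}\<close> with \<open>1 \<le> i\<close> and
  \<open>r \<le> log (1 + i P)\<close>, so \<open>r \<cdot> Pr(\<alpha> \<ge> i) \<le> Pr(\<alpha> \<ge> i) log (1 + i P)\<close>; tails beyond \<open>L\<close> have
  probability zero. Conversely the threshold \<open>r = log (1 + i P)\<close> attains the \<open>i\<close>-th term.
\<close>

lemma mono_nat_superlevel_eq_atLeast:
  fixes g :: "nat \<Rightarrow> 'a::linorder"
  assumes "mono g" and "r \<le> g k"
  obtains i where "{a. r \<le> g a} = {i..}" and "i \<le> k"
proof
  let ?i = "LEAST a. r \<le> g a"
  show "{a. r \<le> g a} = {?i..}"
    using LeastI[of "\<lambda>a. r \<le> g a", OF assms(2)]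
    by (auto intro: Least_le order_trans[OF _ monoD[OF assms(1)]])
  show "?i \<le> k"
    using assms(2) by (rule Least_le)
qed

lemma threshold_prob_le_Max_tail:
  fixes p :: "nat pmf" and g :: "nat \<Rightarrow> real"
  assumes "set_pmf p \<subseteq> {..L}" and "L \<ge> 1" and "mono g" and "g 0 = 0"
  shows "r * measure_pmf.prob p {a. r \<le> g a}
           \<le> Max ((\<lambda>i. measure_pmf.prob p {i..} * g i) ` {1..L})"
    (is "_ \<le> Max (?v ` _)")
proof -
  have Max_nonneg: "0 \<le> Max (?v ` {1..L})"
  proof -
    have "0 \<le> ?v 1"
      using monoD[OF assms(3), of 0 1] assms(4) by simp
    also have "\<dots> \<le> Max (?v ` {1..L})"
      using assms(2) by (intro Max_ge) auto
    finally show ?thesis .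
  qed
  show ?thesis
  proof (cases "r > 0 \<and> (\<exists>k\<le>L. r \<le> g k)")
    case True
    then obtain k where "k \<le> L" "r \<le> g k" by blast
    then obtain i where superlevel: "{a. r \<le> g a} = {i..}" and "i \<le> L"
      using mono_nat_superlevel_eq_atLeast[OF assms(3)] by (metis order_trans)
    have "r \<le> g i"
      using superlevel by auto
    with True assms(4) have "i \<ge> 1"
      by (cases i) auto
    have "r * measure_pmf.prob p {a. r \<le> g a} \<le> g i * measure_pmf.prob p {i..}"
      unfolding superlevel using \<open>r \<le> g i\<close> by (intro mult_right_mono) auto
    also have "\<dots> = ?v i"
      by simp
    also have "\<dots> \<le> Max (?v ` {1..L})"
      using \<open>i \<ge> 1\<close> \<open>i \<le> L\<close> by (intro Max_ge) auto
    finally show ?thesis .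
  next
    case False
    then consider "r \<le> 0" | "set_pmf p \<inter> {a. r \<le> g a} = {}"
      using assms(1) by force
    then have "r * measure_pmf.prob p {a. r \<le> g a} \<le> 0"
    proof cases
      case 1
      then show ?thesis by (simp add: mult_nonpos_nonneg)
    next
      case 2
      then have "measure_pmf.prob p {a. r \<le> g a} = 0"
        by (simp add: measure_pmf_zero_iff)
      then show ?thesis by simp
    qed
    with Max_nonneg show ?thesis by linarith
  qed
qed

lemma SUP_threshold_prob_eq_Max_tail:
  fixes p :: "nat pmf" and g :: "nat \<Rightarrow> real"
  assumes "set_pmf p \<subseteq> {..L}" and "L \<ge> 1" and "mono g" and "g 0 = 0"
  shows "(SUP r. r * measure_pmf.prob p {a. r \<le> g a})
           = Max ((\<lambda>i. measure_pmf.prob p {i..} * g i) ` {1..L})"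
    (is "(SUP r. ?f r) = Max (?v ` _)")
proof (rule antisym)
  show "(SUP r. ?f r) \<le> Max (?v ` {1..L})"
    using threshold_prob_le_Max_tail[OF assms] by (intro cSUP_least) auto
next
  have "Max (?v ` {1..L}) \<in> ?v ` {1..L}"
    using assms(2) by (intro Max_in) auto
  then obtain i where "i \<in> {1..L}" and Max_eq: "Max (?v ` {1..L}) = ?v i"
    by blast
  have "measure_pmf.prob p {i..} \<le> measure_pmf.prob p {a. g i \<le> g a}"
    using assms(3) by (intro measure_pmf.finite_measure_mono) (auto dest: monoD)
  moreover have "0 \<le> g i"
    using monoD[OF assms(3), of 0 i] assms(4) by simp
  ultimately have "?v i \<le> ?f (g i)"
    by (simp add: mult.commute mult_left_mono)
  also have "\<dots> \<le> (SUP r. ?f r)"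
    using threshold_prob_le_Max_tail[OF assms]
    by (intro cSUP_upper bdd_aboveI[of _ "Max (?v ` {1..L})"]) auto
  finally show "Max (?v ` {1..L}) \<le> (SUP r. ?f r)"
    using Max_eq by simp
qed

theorem proposition2:
  fixes L :: nat and P pB b :: real
  assumes "L \<ge> 1" and "P \<ge> 0" and "0 \<le> pB" and "pB \<le> 1" and "b > 1"
  shows "(SUP r::real. r * measure_pmf.prob (binomial_pmf L (1 - pB))
            {a. log b (1 + real a * P) \<ge> r})
       = Max ((\<lambda>i. measure_pmf.prob (binomial_pmf L (1 - pB)) {a. a \<ge> i}
                      * log b (1 + real i * P)) ` {1..L})"
proof -
  have "set_pmf (binomial_pmf L (1 - pB)) \<subseteq> {..L}"
    using assms by (subst set_pmf_binomial_eq) auto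
  moreover have "mono (\<lambda>a::nat. log b (1 + real a * P))"
    using assms by (intro monoI) (simp add: add_pos_nonneg mult_right_mono)
  ultimately show ?thesis
    using SUP_threshold_prob_eq_Max_tail[of _ L "\<lambda>a. log b (1 + real a * P)"] assms
    by (simp add: atLeast_def)
qed

end
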